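(* Let $S$ be a group or a 0-group. Then a right $S$-act $A_S$ is Rees artinian if and only if it is Rees noetherian.
   Context: A 0-group is a group with an externally adjoined zero element. An $S$-act is Rees artinian (Rees noetherian) if its subacts satisfy the descending (ascending) chain condition. *)

theory Defs
  imports "HOL-Algebra.Group"
begin

definition zero_group :: "('a, 'b) monoid_scheme \<Rightarrow> bool" where
  "zero_group S \<longleftrightarrow>
     (\<forall>x \<in> carrier S. \<forall>y \<in> carrier S. x \<otimes>\<^bsub>S\<^esub> y \<in> carrier S) \<and>
     (\<forall>x \<in> carrier S. \<forall>y \<in> carrier S. \<forall>w \<in> carrier S.
        (x \<otimes>\<^bsub>S\<^esub> y) \<otimes>\<^bsub>S\<^esub> w = x \<otimes>\<^bsub>S\<^esub> (y \<otimes>\<^bsub>S\<^esub> w)) \<and>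
     (\<exists>z \<in> carrier S. (\<forall>x \<in> carrier S. z \<otimes>\<^bsub>S\<^esub> x = z \<and> x \<otimes>\<^bsub>S\<^esub> z = z)
        \<and> group (S\<lparr>carrier := carrier S - {z}\<rparr>))"

definition right_act :: "('a, 'b) monoid_scheme \<Rightarrow> 'c set \<Rightarrow> ('c \<Rightarrow> 'a \<Rightarrow> 'c) \<Rightarrow> bool" where
  "right_act S A act \<longleftrightarrow>
     (\<forall>a \<in> A. \<forall>s \<in> carrier S. act a s \<in> A) \<and>
     (\<forall>a \<in> A. \<forall>s \<in> carrier S. \<forall>t \<in> carrier S. act (act a s) t = act a (s \<otimes>\<^bsub>S\<^esub> t))"

definition subact :: "('a, 'b) monoid_scheme \<Rightarrow> 'c set \<Rightarrow> ('c \<Rightarrow> 'a \<Rightarrow> 'c) \<Rightarrow> 'c set \<Rightarrow> bool" where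
  "subact S A act B \<longleftrightarrow> B \<subseteq> A \<and> B \<noteq> {} \<and> (\<forall>b \<in> B. \<forall>s \<in> carrier S. act b s \<in> B)"

definition rees_artinian :: "('a, 'b) monoid_scheme \<Rightarrow> 'c set \<Rightarrow> ('c \<Rightarrow> 'a \<Rightarrow> 'c) \<Rightarrow> bool" where
  "rees_artinian S A act \<longleftrightarrow>
     (\<forall>f :: nat \<Rightarrow> 'c set. (\<forall>n. subact S A act (f n)) \<and> (\<forall>n. f (Suc n) \<subseteq> f n)
        \<longrightarrow> (\<exists>N. \<forall>n \<ge> N. f n = f N))"

definition rees_noetherian :: "('a, 'b) monoid_scheme \<Rightarrow> 'c set \<Rightarrow> ('c \<Rightarrow> 'a \<Rightarrow> 'c) \<Rightarrow> bool" where
  "rees_noetherian S A act \<longleftrightarrow>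
     (\<forall>f :: nat \<Rightarrow> 'c set. (\<forall>n. subact S A act (f n)) \<and> (\<forall>n. f n \<subseteq> f (Suc n))
        \<longrightarrow> (\<exists>N. \<forall>n \<ge> N. f n = f N))"

end

theory Submission
  imports Defs
begin

text \<open>Subacts of A are exactly the nonempty down-sets of the preorder
  x \<preceq> y :\<longleftrightarrow> x = y \<or> x \<in> y S on A. Call an element of A of level 2 if it is not fixed by
  the identity, of level 0 if it is fixed by all of S, and of level 1 otherwise.
  Since every element of S is right invertible or a left zero, two comparable
  elements of the same level generate the same cyclic subact. Hence a chain of
  pairwise non-equivalent elements has at most three members, so if there are
  infinitely many equivalence classes there is an infinite antichain, which
  yields both an infinite strictly ascending and an infinite strictly descending
  chain of subacts. Otherwise there are only finitely many subacts and both
  chain conditions hold trivially.\<close>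

definition down_closed :: "'c set \<Rightarrow> ('c \<Rightarrow> 'c \<Rightarrow> bool) \<Rightarrow> 'c set \<Rightarrow> bool" where
  "down_closed A r B \<longleftrightarrow> B \<subseteq> A \<and> B \<noteq> {} \<and> (\<forall>y\<in>B. \<forall>x\<in>A. r x y \<longrightarrow> x \<in> B)"

definition equiv_class :: "'c set \<Rightarrow> ('c \<Rightarrow> 'c \<Rightarrow> bool) \<Rightarrow> 'c \<Rightarrow> 'c set" where
  "equiv_class A r x = {y\<in>A. r x y \<and> r y x}"

definition dcc_on :: "('c set \<Rightarrow> bool) \<Rightarrow> bool" where
  "dcc_on P \<longleftrightarrow>
     (\<forall>f. (\<forall>n. P (f n)) \<and> (\<forall>n. f (Suc n) \<subseteq> f n) \<longrightarrow> (\<exists>N. \<forall>n\<ge>N. f n = f N))"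

definition acc_on :: "('c set \<Rightarrow> bool) \<Rightarrow> bool" where
  "acc_on P \<longleftrightarrow>
     (\<forall>f. (\<forall>n. P (f n)) \<and> (\<forall>n. f n \<subseteq> f (Suc n)) \<longrightarrow> (\<exists>N. \<forall>n\<ge>N. f n = f N))"

lemma dcc_on_finite:
  assumes "finite {B. P B}"
  shows "dcc_on P"
  unfolding dcc_on_def
proof (intro allI impI)
  fix f :: "nat \<Rightarrow> 'a set"
  assume f: "(\<forall>n. P (f n)) \<and> (\<forall>n. f (Suc n) \<subseteq> f n)"
  have "finite (range f)"
    by (rule finite_subset[OF _ assms]) (use f in auto)
  then obtain N where minimal: "\<And>n. f n \<subseteq> f N \<Longrightarrow> f N = f n"
    using finite_has_minimal[of "range f"] by auto
  have "f n = f N" if "n \<ge> N" for n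
    using minimal lift_Suc_antimono_le[of f N n] f that by auto
  then show "\<exists>N. \<forall>n\<ge>N. f n = f N"
    by blast
qed

lemma acc_on_finite:
  assumes "finite {B. P B}"
  shows "acc_on P"
  unfolding acc_on_def
proof (intro allI impI)
  fix f :: "nat \<Rightarrow> 'a set"
  assume f: "(\<forall>n. P (f n)) \<and> (\<forall>n. f n \<subseteq> f (Suc n))"
  have "finite (range f)"
    by (rule finite_subset[OF _ assms]) (use f in auto)
  then obtain N where maximal: "\<And>n. f N \<subseteq> f n \<Longrightarrow> f N = f n"
    using finite_has_maximal[of "range f"] by auto
  have "f n = f N" if "n \<ge> N" for n
    using maximal lift_Suc_mono_le[of f N n] f that by auto
  then show "\<exists>N. \<forall>n\<ge>N. f n = f N"
    by blast
qed

lemma finite_down_closed: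
  assumes reflexive: "\<And>x. x \<in> A \<Longrightarrow> r x x"
    and "finite (equiv_class A r ` A)"
  shows "finite {B. down_closed A r B}"
proof (rule finite_subset)
  show "{B. down_closed A r B} \<subseteq> Union ` Pow (equiv_class A r ` A)"
  proof
    fix B
    assume "B \<in> {B. down_closed A r B}"
    then have B: "down_closed A r B"
      by simp
    then have "B = \<Union> (equiv_class A r ` B)"
      using reflexive unfolding down_closed_def equiv_class_def by blast
    moreover have "equiv_class A r ` B \<in> Pow (equiv_class A r ` A)"
      using B unfolding down_closed_def by auto
    ultimately show "B \<in> Union ` Pow (equiv_class A r ` A)"
      by blast
  qed
  show "finite (Union ` Pow (equiv_class A r ` A))"
    using assms(2) by simp
qed

lemma down_closed_down_closure:
  assumes reflexive: "\<And>x. x \<in> A \<Longrightarrow> r x x"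
    and transitive: "\<And>x y w. x \<in> A \<Longrightarrow> y \<in> A \<Longrightarrow> w \<in> A \<Longrightarrow> r x y \<Longrightarrow> r y w \<Longrightarrow> r x w"
    and "X \<subseteq> A" "X \<noteq> {}"
  shows "down_closed A r {x\<in>A. \<exists>y\<in>X. r x y}"
  using assms unfolding down_closed_def by blast

lemma antichain_not_dcc_on_down_closed:
  fixes a :: "nat \<Rightarrow> 'c"
  assumes reflexive: "\<And>x. x \<in> A \<Longrightarrow> r x x"
    and transitive: "\<And>x y w. x \<in> A \<Longrightarrow> y \<in> A \<Longrightarrow> w \<in> A \<Longrightarrow> r x y \<Longrightarrow> r y w \<Longrightarrow> r x w"
    and a: "\<And>i. a i \<in> A" and antichain: "\<And>i j. i \<noteq> j \<Longrightarrow> \<not> r (a i) (a j)"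
  shows "\<not> dcc_on (down_closed A r)"
proof
  define D where "D n = {x\<in>A. \<exists>y\<in>a ` {n..}. r x y}" for n
  assume "dcc_on (down_closed A r)"
  moreover have "down_closed A r (D n)" for n
    unfolding D_def using a by (intro down_closed_down_closure[of A r]) (auto intro: reflexive transitive)
  moreover have "D (Suc n) \<subseteq> D n" for n
    unfolding D_def by auto
  ultimately obtain N where "\<forall>n\<ge>N. D n = D N"
    unfolding dcc_on_def by blast
  then have "D (Suc N) = D N"
    by (metis le_SucI order_refl)
  moreover have "a N \<in> D N"
    unfolding D_def using a reflexive by auto
  moreover have "a N \<notin> D (Suc N)"
    unfolding D_def using antichain[of N] by auto
  ultimately show False
    by simp
qed

lemma antichain_not_acc_on_down_closed:
  fixes a :: "nat \<Rightarrow> 'c"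
  assumes reflexive: "\<And>x. x \<in> A \<Longrightarrow> r x x"
    and transitive: "\<And>x y w. x \<in> A \<Longrightarrow> y \<in> A \<Longrightarrow> w \<in> A \<Longrightarrow> r x y \<Longrightarrow> r y w \<Longrightarrow> r x w"
    and a: "\<And>i. a i \<in> A" and antichain: "\<And>i j. i \<noteq> j \<Longrightarrow> \<not> r (a i) (a j)"
  shows "\<not> acc_on (down_closed A r)"
proof
  define U where "U n = {x\<in>A. \<exists>y\<in>a ` {..n}. r x y}" for n
  assume "acc_on (down_closed A r)"
  moreover have "down_closed A r (U n)" for n
    unfolding U_def using a by (intro down_closed_down_closure[of A r]) (auto intro: reflexive transitive)
  moreover have "U n \<subseteq> U (Suc n)" for n
    unfolding U_def by auto
  ultimately obtain N where "\<forall>n\<ge>N. U n = U N"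
    unfolding acc_on_def by blast
  then have "U (Suc N) = U N"
    by (metis le_SucI order_refl)
  moreover have "a (Suc N) \<in> U (Suc N)"
    unfolding U_def using a reflexive by auto
  moreover have "a (Suc N) \<notin> U N"
    unfolding U_def using antichain[of "Suc N"] by auto
  ultimately show False
    by simp
qed

lemma infinite_classes_imp_antichain:
  fixes lev :: "'c \<Rightarrow> 'l"
  assumes transitive: "\<And>x y w. x \<in> A \<Longrightarrow> y \<in> A \<Longrightarrow> w \<in> A \<Longrightarrow> r x y \<Longrightarrow> r y w \<Longrightarrow> r x w"
    and finite_levels: "finite (lev ` A)"
    and level_sym: "\<And>x y. x \<in> A \<Longrightarrow> y \<in> A \<Longrightarrow> r x y \<Longrightarrow> lev x = lev y \<Longrightarrow> r y x"
    and "infinite (equiv_class A r ` A)"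
  shows "\<exists>a :: nat \<Rightarrow> 'c. (\<forall>i. a i \<in> A) \<and> (\<forall>i j. i \<noteq> j \<longrightarrow> \<not> r (a i) (a j))"
proof -
  have "equiv_class A r ` A = (\<Union>k\<in>lev ` A. equiv_class A r ` {x\<in>A. lev x = k})"
    by auto
  with assms(4) have "infinite (\<Union>k\<in>lev ` A. equiv_class A r ` {x\<in>A. lev x = k})"
    by argo
  then obtain k where "infinite (equiv_class A r ` {x\<in>A. lev x = k})"
    by (meson finite_UN_I finite_levels)
  then obtain c :: "nat \<Rightarrow> 'c set"
    where c: "inj c" "range c \<subseteq> equiv_class A r ` {x\<in>A. lev x = k}"
    using infinite_countable_subset by blast
  then have "\<forall>i. \<exists>x. x \<in> A \<and> lev x = k \<and> c i = equiv_class A r x"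
    by blast
  then obtain a where a: "\<And>i. a i \<in> A" "\<And>i. lev (a i) = k" "\<And>i. c i = equiv_class A r (a i)"
    by metis
  have "\<not> r (a i) (a j)" if "i \<noteq> j" for i j
  proof
    assume "r (a i) (a j)"
    moreover from this have "r (a j) (a i)"
      using level_sym[of "a i" "a j"] a by simp
    ultimately have "c i = c j"
      unfolding a(3) equiv_class_def using transitive a(1) by blast
    with c(1) that show False
      by (meson injD)
  qed
  with a(1) show ?thesis
    by blast
qed

lemma dcc_on_down_closed_iff_acc_on:
  fixes lev :: "'c \<Rightarrow> 'l"
  assumes reflexive: "\<And>x. x \<in> A \<Longrightarrow> r x x"
    and transitive: "\<And>x y w. x \<in> A \<Longrightarrow> y \<in> A \<Longrightarrow> w \<in> A \<Longrightarrow> r x y \<Longrightarrow> r y w \<Longrightarrow> r x w"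
    and finite_levels: "finite (lev ` A)"
    and level_sym: "\<And>x y. x \<in> A \<Longrightarrow> y \<in> A \<Longrightarrow> r x y \<Longrightarrow> lev x = lev y \<Longrightarrow> r y x"
  shows "dcc_on (down_closed A r) \<longleftrightarrow> acc_on (down_closed A r)"
proof (cases "finite (equiv_class A r ` A)")
  case True
  then have "finite {B. down_closed A r B}"
    using finite_down_closed[of A r] reflexive by simp
  then show ?thesis
    using dcc_on_finite acc_on_finite by blast
next
  case False
  have "\<exists>a :: nat \<Rightarrow> 'c. (\<forall>i. a i \<in> A) \<and> (\<forall>i j. i \<noteq> j \<longrightarrow> \<not> r (a i) (a j))"
    by (rule infinite_classes_imp_antichain[of A r lev]) (fact transitive finite_levels level_sym False)+
  then obtain a :: "nat \<Rightarrow> 'c"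
    where a: "\<And>i. a i \<in> A" and antichain: "\<And>i j. i \<noteq> j \<Longrightarrow> \<not> r (a i) (a j)"
    by blast
  have "\<not> dcc_on (down_closed A r)"
    by (rule antichain_not_dcc_on_down_closed[of A r a]; fact reflexive transitive a antichain)
  moreover have "\<not> acc_on (down_closed A r)"
    by (rule antichain_not_acc_on_down_closed[of A r a]; fact reflexive transitive a antichain)
  ultimately show ?thesis
    by blast
qed

definition right_invertible_or_left_zero :: "('a, 'b) monoid_scheme \<Rightarrow> bool" where
  "right_invertible_or_left_zero S \<longleftrightarrow>
     \<one>\<^bsub>S\<^esub> \<in> carrier S \<and>
     (\<forall>s\<in>carrier S. \<forall>t\<in>carrier S. s \<otimes>\<^bsub>S\<^esub> t \<in> carrier S) \<and>
     (\<forall>s\<in>carrier S. s \<otimes>\<^bsub>S\<^esub> \<one>\<^bsub>S\<^esub> = s) \<and>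
     (\<forall>s\<in>carrier S. (\<exists>t\<in>carrier S. s \<otimes>\<^bsub>S\<^esub> t = \<one>\<^bsub>S\<^esub>) \<or> (\<forall>t\<in>carrier S. s \<otimes>\<^bsub>S\<^esub> t = s))"

lemma group_right_invertible_or_left_zero:
  assumes "group S"
  shows "right_invertible_or_left_zero S"
proof -
  interpret group S
    by fact
  have "\<exists>t\<in>carrier S. s \<otimes>\<^bsub>S\<^esub> t = \<one>\<^bsub>S\<^esub>" if "s \<in> carrier S" for s
    using that by (intro bexI[of _ "inv\<^bsub>S\<^esub> s"]) auto
  then show ?thesis
    unfolding right_invertible_or_left_zero_def by auto
qed

lemma zero_group_right_invertible_or_left_zero:
  assumes "zero_group S"
  shows "right_invertible_or_left_zero S"
proof -
  obtain z where z: "z \<in> carrier S" "\<And>x. x \<in> carrier S \<Longrightarrow> z \<otimes>\<^bsub>S\<^esub> x = z \<and> x \<otimes>\<^bsub>S\<^esub> z = z"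
    and G: "group (S\<lparr>carrier := carrier S - {z}\<rparr>)"
    and closed: "\<forall>x\<in>carrier S. \<forall>y\<in>carrier S. x \<otimes>\<^bsub>S\<^esub> y \<in> carrier S"
    using assms unfolding zero_group_def by blast
  interpret G: group "S\<lparr>carrier := carrier S - {z}\<rparr>"
    by (fact G)
  have one: "\<one>\<^bsub>S\<^esub> \<in> carrier S - {z}"
    using G.one_closed by simp
  have "s \<otimes>\<^bsub>S\<^esub> \<one>\<^bsub>S\<^esub> = s" if "s \<in> carrier S" for s
    using that z one G.r_one[of s] by (cases "s = z") auto
  moreover have "(\<exists>t\<in>carrier S. s \<otimes>\<^bsub>S\<^esub> t = \<one>\<^bsub>S\<^esub>) \<or> (\<forall>t\<in>carrier S. s \<otimes>\<^bsub>S\<^esub> t = s)"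
    if "s \<in> carrier S" for s
    using that z G.r_inv[of s] G.inv_closed[of s] by (cases "s = z") auto
  ultimately show ?thesis
    unfolding right_invertible_or_left_zero_def using one closed by blast
qed

definition orbit_le :: "('a, 'b) monoid_scheme \<Rightarrow> ('c \<Rightarrow> 'a \<Rightarrow> 'c) \<Rightarrow> 'c \<Rightarrow> 'c \<Rightarrow> bool" where
  "orbit_le S act x y \<longleftrightarrow> x = y \<or> (\<exists>s\<in>carrier S. x = act y s)"

definition act_level :: "('a, 'b) monoid_scheme \<Rightarrow> ('c \<Rightarrow> 'a \<Rightarrow> 'c) \<Rightarrow> 'c \<Rightarrow> nat" where
  "act_level S act x =
     (if act x \<one>\<^bsub>S\<^esub> \<noteq> x then 2 else if \<forall>s\<in>carrier S. act x s = x then 0 else 1)"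

lemma subact_iff_down_closed:
  assumes "right_act S A act"
  shows "subact S A act B \<longleftrightarrow> down_closed A (orbit_le S act) B"
  using assms unfolding subact_def down_closed_def orbit_le_def right_act_def by blast

lemma orbit_le_trans:
  assumes "right_act S A act" "right_invertible_or_left_zero S"
    and "w \<in> A" "orbit_le S act x y" "orbit_le S act y w"
  shows "orbit_le S act x w"
proof -
  have "orbit_le S act (act y s) w" if "s \<in> carrier S" for s
  proof (cases "y = w")
    case True
    with that show ?thesis
      unfolding orbit_le_def by blast
  next
    case False
    then obtain t where t: "t \<in> carrier S" "y = act w t"
      using assms(5) unfolding orbit_le_def by blast
    then have "act y s = act w (t \<otimes>\<^bsub>S\<^esub> s)" "t \<otimes>\<^bsub>S\<^esub> s \<in> carrier S"
      using assms(1-3) that unfolding right_act_def right_invertible_or_left_zero_def by auto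
    then show ?thesis
      unfolding orbit_le_def by blast
  qed
  then show ?thesis
    using assms(4,5) unfolding orbit_le_def by blast
qed

lemma orbit_le_level_sym:
  assumes act: "right_act S A act" and S: "right_invertible_or_left_zero S"
    and "y \<in> A" "orbit_le S act x y" and level: "act_level S act x = act_level S act y"
  shows "orbit_le S act y x"
proof (cases "x = y")
  case True
  then show ?thesis
    by (simp add: orbit_le_def)
next
  case False
  then obtain s where s: "s \<in> carrier S" "x = act y s"
    using assms(4) unfolding orbit_le_def by blast
  have compose: "act x t = act y (s \<otimes>\<^bsub>S\<^esub> t)" if "t \<in> carrier S" for t
    using act \<open>y \<in> A\<close> s that unfolding right_act_def by simp
  have "act x \<one>\<^bsub>S\<^esub> = x"
    using compose S s unfolding right_invertible_or_left_zero_def by simp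
  moreover have "\<not> (\<forall>t\<in>carrier S. act y t = y)"
    using s False by blast
  ultimately have "act_level S act y = 1" "act y \<one>\<^bsub>S\<^esub> = y"
    using level unfolding act_level_def by (auto split: if_splits)
  with level have "act_level S act x = 1"
    by simp
  then have "\<not> (\<forall>t\<in>carrier S. act x t = x)"
    unfolding act_level_def by (auto split: if_splits)
  then have "\<not> (\<forall>t\<in>carrier S. s \<otimes>\<^bsub>S\<^esub> t = s)"
    using compose s(2) by metis
  then obtain t where "t \<in> carrier S" "s \<otimes>\<^bsub>S\<^esub> t = \<one>\<^bsub>S\<^esub>"
    using S s unfolding right_invertible_or_left_zero_def by blast
  then have "act x t = y"
    using compose \<open>act y \<one>\<^bsub>S\<^esub> = y\<close> by simp
  with \<open>t \<in> carrier S\<close> show ?thesis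
    unfolding orbit_le_def by blast
qed

theorem mainTheorem15:
  fixes S :: "('a, 'b) monoid_scheme" and A :: "'c set" and act :: "'c \<Rightarrow> 'a \<Rightarrow> 'c"
  assumes "group S \<or> zero_group S"
    and "right_act S A act"
  shows "rees_artinian S A act \<longleftrightarrow> rees_noetherian S A act"
proof -
  have S: "right_invertible_or_left_zero S"
    using assms(1) group_right_invertible_or_left_zero zero_group_right_invertible_or_left_zero
    by blast
  have subacts: "subact S A act = down_closed A (orbit_le S act)"
    using subact_iff_down_closed[OF assms(2)] by blast
  have "dcc_on (down_closed A (orbit_le S act)) \<longleftrightarrow> acc_on (down_closed A (orbit_le S act))"
  proof (rule dcc_on_down_closed_iff_acc_on[where lev = "act_level S act"])
    show "finite (act_level S act ` A)"
      by (rule finite_subset[of _ "{0, 1, 2}"]) (auto simp: act_level_def)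
    show "orbit_le S act x x" for x
      by (simp add: orbit_le_def)
    show "orbit_le S act x w"
      if "x \<in> A" "y \<in> A" "w \<in> A" "orbit_le S act x y" "orbit_le S act y w" for x y w
      by (rule orbit_le_trans[OF assms(2) S that(3-5)])
    show "orbit_le S act y x"
      if "x \<in> A" "y \<in> A" "orbit_le S act x y" "act_level S act x = act_level S act y" for x y
      by (rule orbit_le_level_sym[OF assms(2) S that(2-4)])
  qed
  then show ?thesis
    unfolding rees_artinian_def rees_noetherian_def subacts dcc_on_def acc_on_def .
qed

end
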